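(* Let $h:[0,\infty)\to[0,\infty)$ be a super-multiplicative function, i.e. $h(xy)\ge h(x)h(y)$ for all $x,y\ge 0$, such that $h(t)\ge t$ for all $t\ge0$. Let $f:[a,b]\to\mathbb{R}$ be $h$-mid-convex, i.e. $$f\Big(\frac{x+y}{2}\Big)\le h\Big(\frac12\Big)\big(f(x)+f(y)\big)\quad\text{for all } x,y\in[a,b].$$ Then for every $n\in\mathbb{N}$, all $x_1,\dots,x_n\in[a,b]$ and all rational numbers $\lambda_1,\dots,\lambda_n\in\mathbb{Q}\cap[0,1]$ with $\sum_{i=1}^n\lambda_i=1$, $$f\Big(\sum_{i=1}^n\lambda_ix_i\Big)\le\sum_{i=1}^n h(\lambda_i)f(x_i).$$
   Context: The paper writes $h:\mathbb{R}^+\to\mathbb{R}^+$; here $\mathbb{R}^+$ is taken to be $[0,\infty)$. *)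

theory Defs
  imports "HOL-Analysis.Analysis"
begin

end

theory Submission
  imports Defs
begin

(* A supermultiplicative h with h t \<ge> t is the identity on [0, \<infinity>): from h 1 \<ge> h 1 * h 1 we get
   h 1 = 1, and then t * h (1/t) \<le> h t * h (1/t) \<le> h 1 forces h t \<le> t. Hence h-mid-convexity is
   ordinary midpoint convexity, and the claim is Jensen's inequality with rational weights.
   For two points and t = p/q, the gap between f and its chord along the grid k/q, k = 0..q, is a
   discretely convex sequence vanishing at both ends, hence nonpositive by the maximum principle;
   more points follow by splitting off one point at a time, which keeps the weights rational. *)

lemma supermultiplicative_ge_self_eq_self:
  fixes h :: "real \<Rightarrow> real"
  assumes supermult: "\<And>u v. u \<ge> 0 \<Longrightarrow> v \<ge> 0 \<Longrightarrow> h (u * v) \<ge> h u * h v"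
    and ge_self: "\<And>t. t \<ge> 0 \<Longrightarrow> h t \<ge> t"
    and "t \<ge> 0"
  shows "h t = t"
proof (cases "t = 0")
  case True
  have "h 0 \<ge> h 0 * h 2" using supermult[of 0 2] by simp
  moreover have "h 0 * h 2 \<ge> h 0 * 2" using ge_self[of 0] ge_self[of 2] by (simp add: mult_left_mono)
  ultimately show ?thesis using True ge_self[of 0] by simp
next
  case False
  with \<open>t \<ge> 0\<close> have "t > 0" by simp
  have "h 1 * h 1 \<le> h 1" using supermult[of 1 1] by simp
  with ge_self[of 1] have h1: "h 1 \<le> 1" by (simp add: mult_le_cancel_left2)
  have "h t * (1 / t) \<le> h t * h (1 / t)"
    using ge_self[of t] ge_self[of "1 / t"] \<open>t > 0\<close> by (intro mult_left_mono) auto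
  also have "\<dots> \<le> h 1" using supermult[of t "1 / t"] \<open>t > 0\<close> by simp
  finally have "h t \<le> t * h 1" using \<open>t > 0\<close> by (simp add: field_simps)
  also have "\<dots> \<le> t" using h1 \<open>t > 0\<close> by simp
  finally show ?thesis using ge_self[of t] \<open>t \<ge> 0\<close> by simp
qed

definition midpoint_convex_on :: "'a::real_vector set \<Rightarrow> ('a \<Rightarrow> real) \<Rightarrow> bool" where
  "midpoint_convex_on S f \<longleftrightarrow> (\<forall>u\<in>S. \<forall>v\<in>S. f (midpoint u v) \<le> (f u + f v) / 2)"

lemma discrete_midpoint_convex_le_max:
  fixes d :: "nat \<Rightarrow> real"
  assumes mid: "\<And>k. 0 < k \<Longrightarrow> k < q \<Longrightarrow> 2 * d k \<le> d (k - 1) + d (k + 1)"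
    and "k \<le> q"
  shows "d k \<le> max (d 0) (d q)"
proof -
  define M where "M = Max (d ` {..q})"
  have le_M: "d j \<le> M" if "j \<le> q" for j
    using that by (simp add: M_def)
  have "M \<in> d ` {..q}" unfolding M_def by (rule Max_in) auto
  then have "\<exists>j. j \<le> q \<and> d j = M" by auto
  then have "\<exists>j. (j \<le> q \<and> d j = M) \<and> (\<forall>i<j. \<not> (i \<le> q \<and> d i = M))"
    by (rule exists_least_iff[THEN iffD1])
  then obtain j where j: "j \<le> q" "d j = M" and least: "\<And>i. i < j \<Longrightarrow> d i \<noteq> M"
    by auto
  have "j = 0 \<or> j = q"
  proof (rule ccontr)
    assume "\<not> (j = 0 \<or> j = q)"
    with j have inner: "0 < j" "j < q" by auto
    then have "d (j - 1) < M" using le_M[of "j - 1"] least[of "j - 1"] by fastforce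
    moreover have "d (j + 1) \<le> M" using le_M inner by simp
    ultimately show False using mid[OF inner] j by linarith
  qed
  then have "M \<le> max (d 0) (d q)" using j by auto
  with le_M[OF \<open>k \<le> q\<close>] show ?thesis by linarith
qed

lemma midpoint_convex_on_rational_combination:
  fixes f :: "'a::real_vector \<Rightarrow> real"
  assumes mid: "midpoint_convex_on S f" and "convex S" and "u \<in> S" and "v \<in> S"
    and "t \<in> \<rat>" and "0 \<le> t" and "t \<le> 1"
  shows "f (t *\<^sub>R u + (1 - t) *\<^sub>R v) \<le> t * f u + (1 - t) * f v"
proof -
  obtain p q :: nat where "q \<noteq> 0" and "\<bar>t\<bar> = real p / real q"
    using Rats_abs_nat_div_natE[OF \<open>t \<in> \<rat>\<close>] by metis
  with \<open>0 \<le> t\<close> have t: "t = real p / real q" by simp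
  with \<open>t \<le> 1\<close> \<open>q \<noteq> 0\<close> have "p \<le> q" by (simp add: divide_le_eq_1)
  define s where "s k = real k / real q" for k
  define P where "P k = s k *\<^sub>R u + (1 - s k) *\<^sub>R v" for k
  define d where "d k = f (P k) - (s k * f u + (1 - s k) * f v)" for k
  have s_succ: "s (k + 1) = s k + 1 / real q" for k
    by (simp add: s_def add_divide_distrib)
  have s_pred: "s (k - 1) = s k - 1 / real q" if "0 < k" for k
    using that by (simp add: s_def diff_divide_distrib)
  have P_in: "P k \<in> S" if "k \<le> q" for k
    using that \<open>q \<noteq> 0\<close> \<open>convex S\<close> \<open>u \<in> S\<close> \<open>v \<in> S\<close>
    by (auto simp: P_def s_def divide_le_eq_1 intro: convexD)
  have "2 * d k \<le> d (k - 1) + d (k + 1)" if "0 < k" "k < q" for k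
  proof -
    have "midpoint (P (k - 1)) (P (k + 1)) = P k"
      unfolding midpoint_eq_iff P_def s_succ s_pred[OF \<open>0 < k\<close>] by (simp add: algebra_simps)
    moreover have "f (midpoint (P (k - 1)) (P (k + 1))) \<le> (f (P (k - 1)) + f (P (k + 1))) / 2"
      using mid P_in that by (simp add: midpoint_convex_on_def)
    ultimately have "2 * f (P k) \<le> f (P (k - 1)) + f (P (k + 1))" by simp
    then show ?thesis unfolding d_def s_succ s_pred[OF \<open>0 < k\<close>] by (simp add: algebra_simps)
  qed
  then have "d p \<le> max (d 0) (d q)"
    using \<open>p \<le> q\<close> by (rule discrete_midpoint_convex_le_max)
  moreover have "d 0 = 0" "d q = 0"
    using \<open>q \<noteq> 0\<close> by (simp_all add: d_def P_def s_def)
  ultimately show ?thesis by (simp add: d_def P_def s_def t)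
qed

lemma midpoint_convex_on_rational_sum:
  fixes f :: "'a::real_vector \<Rightarrow> real" and lam :: "'i \<Rightarrow> real" and x :: "'i \<Rightarrow> 'a"
  assumes mid: "midpoint_convex_on S f" and "convex S" and "finite A"
    and "sum lam A = 1"
    and "\<And>i. i \<in> A \<Longrightarrow> lam i \<in> \<rat>" and "\<And>i. i \<in> A \<Longrightarrow> 0 \<le> lam i"
    and "\<And>i. i \<in> A \<Longrightarrow> x i \<in> S"
  shows "f (\<Sum>i\<in>A. lam i *\<^sub>R x i) \<le> (\<Sum>i\<in>A. lam i * f (x i))"
  using \<open>finite A\<close> assms(4-)
proof (induction A arbitrary: lam rule: finite_induct)
  case empty
  then show ?case by simp
next
  case (insert j A)
  have rest_sum: "sum lam A = 1 - lam j"
    using insert.prems(1) insert.hyps by simp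
  show ?case
  proof (cases "lam j = 1")
    case True
    with rest_sum insert.prems have "\<forall>i\<in>A. lam i = 0"
      by (simp add: sum_nonneg_eq_0_iff insert.hyps(1))
    with True show ?thesis using insert.hyps by simp
  next
    case False
    have "0 \<le> sum lam A" using insert.prems by (intro sum_nonneg) auto
    with False rest_sum have pos: "1 - lam j > 0" by simp
    define mu where "mu i = lam i / (1 - lam j)" for i
    have mu_sum: "sum mu A = 1"
      using pos rest_sum by (simp add: mu_def flip: sum_divide_distrib)
    have mu_rat: "mu i \<in> \<rat>" and mu_nonneg: "0 \<le> mu i" if "i \<in> A" for i
      using insert.prems pos that by (auto simp: mu_def)
    define y where "y = (\<Sum>i\<in>A. mu i *\<^sub>R x i)"
    have "y \<in> S"
      unfolding y_def using insert.prems
      by (intro convex_sum[OF \<open>finite A\<close> \<open>convex S\<close> mu_sum mu_nonneg]) auto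
    have IH: "f y \<le> (\<Sum>i\<in>A. mu i * f (x i))"
      unfolding y_def using insert.prems by (intro insert.IH mu_sum mu_rat mu_nonneg) auto
    have "f (\<Sum>i\<in>insert j A. lam i *\<^sub>R x i) = f (lam j *\<^sub>R x j + (1 - lam j) *\<^sub>R y)"
      using insert.hyps pos by (simp add: y_def mu_def scaleR_sum_right)
    also have "\<dots> \<le> lam j * f (x j) + (1 - lam j) * f y"
      using insert.prems pos
      by (intro midpoint_convex_on_rational_combination[OF mid \<open>convex S\<close> _ \<open>y \<in> S\<close>]) auto
    also have "\<dots> \<le> lam j * f (x j) + (1 - lam j) * (\<Sum>i\<in>A. mu i * f (x i))"
      using IH pos by simp
    also have "\<dots> = (\<Sum>i\<in>insert j A. lam i * f (x i))"
      using insert.hyps pos by (simp add: mu_def sum_distrib_left)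
    finally show ?thesis .
  qed
qed

theorem theorem2p3:
  fixes h :: "real \<Rightarrow> real" and f :: "real \<Rightarrow> real" and a b :: real
    and n :: nat and x lam :: "nat \<Rightarrow> real"
  assumes h_nonneg: "\<And>t. t \<ge> 0 \<Longrightarrow> h t \<ge> 0"
    and h_supermult: "\<And>u v. u \<ge> 0 \<Longrightarrow> v \<ge> 0 \<Longrightarrow> h (u * v) \<ge> h u * h v"
    and h_ge: "\<And>t. t \<ge> 0 \<Longrightarrow> h t \<ge> t"
    and f_hmid: "\<And>u v. u \<in> {a..b} \<Longrightarrow> v \<in> {a..b} \<Longrightarrow>
                   f ((u + v) / 2) \<le> h (1/2) * (f u + f v)"
    and x_in: "\<And>i. i \<in> {1..n} \<Longrightarrow> x i \<in> {a..b}"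
    and lam_rat: "\<And>i. i \<in> {1..n} \<Longrightarrow> lam i \<in> \<rat>"
    and lam_range: "\<And>i. i \<in> {1..n} \<Longrightarrow> lam i \<in> {0..1}"
    and lam_sum: "(\<Sum>i=1..n. lam i) = 1"
  shows "f (\<Sum>i=1..n. lam i * x i) \<le> (\<Sum>i=1..n. h (lam i) * f (x i))"
proof -
  have h_id: "h t = t" if "t \<ge> 0" for t
    using supermultiplicative_ge_self_eq_self[OF h_supermult h_ge that] .
  have "midpoint_convex_on {a..b} f"
    using f_hmid h_id[of "1/2"] by (simp add: midpoint_convex_on_def midpoint_def)
  then have "f (\<Sum>i=1..n. lam i *\<^sub>R x i) \<le> (\<Sum>i=1..n. lam i * f (x i))"
    using x_in lam_rat lam_range lam_sum
    by (intro midpoint_convex_on_rational_sum[where S = "{a..b}"]) auto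
  also have "\<dots> = (\<Sum>i=1..n. h (lam i) * f (x i))"
    using lam_range h_id by (intro sum.cong) auto
  finally show ?thesis by simp
qed

end
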